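(* For all positive integers $k$ and $n$ with $n\ge 2$, the cycle $C_{2n}$ is a strict prime $k$th-power distance graph. Furthermore, the labels in a strict prime $k$th-power distance labeling of $C_{2n}$ may be chosen arbitrarily large: for every integer $M$ there is such a labeling all of whose labels exceed $M$.
   Context: A strict prime $k$th-power distance labeling of a graph $G$ is an injective map $L:V(G)\to\mathbb{Z}$ such that for every edge $uv$ of $G$, $|L(u)-L(v)|=p^k$ for some prime $p$ (the prime may depend on the edge); $G$ is a strict prime $k$th-power distance graph if it has such a labeling. *)

theory Defs
  imports "HOL-Computational_Algebra.Primes"
begin

text \<open>A simple graph given by a vertex set V and a symmetric edge relation E.
  The cycle C_m (m \<ge> 3) has vertices 0,...,m-1 and edges {i, (i+1) mod m}.\<close>

definition cycle_edge :: "nat \<Rightarrow> nat \<Rightarrow> nat \<Rightarrow> bool" where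
  "cycle_edge m u v \<longleftrightarrow> u < m \<and> v < m \<and> (v = (u + 1) mod m \<or> u = (v + 1) mod m)"

definition strict_prime_power_distance_labeling ::
  "nat \<Rightarrow> 'a set \<Rightarrow> ('a \<Rightarrow> 'a \<Rightarrow> bool) \<Rightarrow> ('a \<Rightarrow> int) \<Rightarrow> bool" where
  "strict_prime_power_distance_labeling k V E L \<longleftrightarrow>
     inj_on L V \<and>
     (\<forall>u\<in>V. \<forall>v\<in>V. E u v \<longrightarrow> (\<exists>p::nat. prime p \<and> \<bar>L u - L v\<bar> = int p ^ k))"

definition strict_prime_power_distance_graph ::
  "nat \<Rightarrow> 'a set \<Rightarrow> ('a \<Rightarrow> 'a \<Rightarrow> bool) \<Rightarrow> bool" where
  "strict_prime_power_distance_graph k V E \<longleftrightarrow>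
     (\<exists>L. strict_prime_power_distance_labeling k V E L)"

end

theory Submission
  imports Defs
begin

text \<open>Walk up the first half of the cycle in steps of \<open>2^k\<close>, jump by \<open>3^k\<close>, walk back down the
  second half in steps of \<open>2^k\<close>, and close the cycle with another jump of \<open>3^k\<close>. For \<open>k \<ge> 1\<close>
  the first half carries even and the second half odd labels, so the labeling is injective.
  Translating a labeling by a constant preserves all distances, which makes the labels
  arbitrarily large.\<close>

lemma strict_prime_power_distance_labeling_translate:
  assumes "strict_prime_power_distance_labeling k V E L"
  shows "strict_prime_power_distance_labeling k V E (\<lambda>v. L v + c)"
  using assms by (auto simp: strict_prime_power_distance_labeling_def inj_on_def)

lemma strict_prime_power_distance_labeling_cycleI:
  assumes "inj_on L {0..<m}"
    and "\<And>u. u < m \<Longrightarrow> \<exists>p::nat. prime p \<and> \<bar>L u - L ((u + 1) mod m)\<bar> = int p ^ k"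
  shows "strict_prime_power_distance_labeling k {0..<m} (cycle_edge m) L"
  unfolding strict_prime_power_distance_labeling_def
proof (intro conjI ballI impI)
  fix u v assume "cycle_edge m u v"
  then have "u < m" "v < m" and "v = (u + 1) mod m \<or> u = (v + 1) mod m"
    by (auto simp: cycle_edge_def)
  then show "\<exists>p::nat. prime p \<and> \<bar>L u - L v\<bar> = int p ^ k"
    using assms(2) by (metis abs_minus_commute)
qed (use assms(1) in simp)

definition cycle_label :: "nat \<Rightarrow> nat \<Rightarrow> nat \<Rightarrow> int" where
  "cycle_label k n v = (if v < n then int v * 2^k else 3^k + int (2*n - 1 - v) * 2^k)"

lemma cycle_label_nonneg: "cycle_label k n v \<ge> 0"
  by (simp add: cycle_label_def)

lemma cycle_label_inj_on:
  assumes "k \<ge> 1"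
  shows "inj_on (cycle_label k n) {0..<2*n}"
proof (rule inj_onI)
  fix u v assume u: "u \<in> {0..<2*n}" and v: "v \<in> {0..<2*n}"
    and eq: "cycle_label k n u = cycle_label k n v"
  have parity: "even (cycle_label k n w) \<longleftrightarrow> w < n" for w
    using assms by (simp add: cycle_label_def)
  have "u < n \<longleftrightarrow> v < n"
    using parity[of u] parity[of v] eq by simp
  then show "u = v"
    using eq u v by (auto simp: cycle_label_def split: if_splits)
qed

lemma cycle_label_step:
  assumes "u < 2*n"
  shows "\<bar>cycle_label k n u - cycle_label k n ((u + 1) mod (2*n))\<bar> \<in> {2^k, 3^k}"
proof -
  consider "u + 1 < n" | "u + 1 = n" | "n \<le> u" "u + 1 < 2*n" | "u + 1 = 2*n"
    using assms by linarith
  then show ?thesis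
  proof cases
    case 3
    then have "int (2*n - 1 - u) = int (2*n - 1 - (u + 1)) + 1" by simp
    with 3 show ?thesis by (simp add: cycle_label_def algebra_simps)
  qed (auto simp: cycle_label_def algebra_simps)
qed

lemma cycle_label_labeling:
  assumes "k \<ge> 1"
  shows "strict_prime_power_distance_labeling k {0..<2*n} (cycle_edge (2*n)) (cycle_label k n)"
proof (rule strict_prime_power_distance_labeling_cycleI)
  show "inj_on (cycle_label k n) {0..<2*n}"
    using cycle_label_inj_on[OF assms] .
  fix u assume "u < 2*n"
  then have "\<bar>cycle_label k n u - cycle_label k n ((u + 1) mod (2*n))\<bar> \<in> {int 2 ^ k, int 3 ^ k}"
    using cycle_label_step by simp
  moreover have "prime (2::nat)" "prime (3::nat)" by auto
  ultimately show "\<exists>p::nat. prime p \<and>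
      \<bar>cycle_label k n u - cycle_label k n ((u + 1) mod (2*n))\<bar> = int p ^ k"
    by blast
qed

theorem mainTheorem12:
  fixes k n :: nat
  assumes "k \<ge> 1" and "n \<ge> 2"
  shows "strict_prime_power_distance_graph k {0..<2*n} (cycle_edge (2*n))
       \<and> (\<forall>M::int. \<exists>L. strict_prime_power_distance_labeling k {0..<2*n} (cycle_edge (2*n)) L
                        \<and> (\<forall>v\<in>{0..<2*n}. L v > M))"
proof (intro conjI allI)
  note labeling = cycle_label_labeling[OF assms(1), of n]
  then show "strict_prime_power_distance_graph k {0..<2*n} (cycle_edge (2*n))"
    unfolding strict_prime_power_distance_graph_def by blast
  fix M :: int
  have "strict_prime_power_distance_labeling k {0..<2*n} (cycle_edge (2*n))
          (\<lambda>v. cycle_label k n v + (M + 1))"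
    using strict_prime_power_distance_labeling_translate[OF labeling] .
  moreover have "\<forall>v\<in>{0..<2*n}. cycle_label k n v + (M + 1) > M"
    using cycle_label_nonneg[of k n] by (auto intro: add_nonneg_pos)
  ultimately show "\<exists>L. strict_prime_power_distance_labeling k {0..<2*n} (cycle_edge (2*n)) L
                        \<and> (\<forall>v\<in>{0..<2*n}. L v > M)"
    by blast
qed

end
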